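(* Let $Q$ be an admissible orientation of $\tilde A_n$ with exactly one source $x$ and one sink $y$, and let $\omega,\upsilon$ be the two different maximal paths of $Q$ (both from $x$ to $y$). Let $a\in\Bbbk\setminus\{0\}$. Then for every indecomposable two-sided ideal $I$ of $\Bbbk Q$, \[(\omega+a\upsilon)\cdot I\cong\begin{cases}(\omega+a\upsilon),&\varepsilon_x\in I,\\0,&\text{otherwise},\end{cases}\qquad I\cdot(\omega+a\upsilon)\cong\begin{cases}(\omega+a\upsilon),&\varepsilon_y\in I,\\0,&\text{otherwise}.\end{cases}\] In particular, $(\omega+a\upsilon)\cdot(\omega+b\upsilon)=0$ for every $b\in\Bbbk\setminus\{0\}$.
   Context: $\Bbbk$ is an algebraically closed field. An admissible orientation of $\tilde A_n$ is a finite quiver with $n$ vertices whose underlying undirected graph is a cycle, having no oriented cycle and at least one source. Paths include trivial paths $\varepsilon_z$; products of paths are concatenations when defined and $0$ otherwise. Maximal paths are paths not properly contained as subpaths of other paths. $(\omega+a\upsilon)$ denotes the ideal $\Bbbk(\omega+a\upsilon)$ generated by $\omega+a\upsilon$. An ideal is indecomposable if non-zero and not a direct sum of two non-zero ideals. *)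

theory Defs
  imports "HOL-Computational_Algebra.Polynomial"
begin

text \<open>Quiver: vertex set V, arrow set E, source map s, target map t.
A path is a pair (start vertex, list of arrows in travel order); the
trivial path at v is (v, []).\<close>

type_synonym ('v,'e) qpath = "'v \<times> 'e list"

fun chain :: "('e \<Rightarrow> 'v) \<Rightarrow> ('e \<Rightarrow> 'v) \<Rightarrow> 'v \<Rightarrow> 'e list \<Rightarrow> bool" where
  "chain s t v [] = True"
| "chain s t v (e # es) = (s e = v \<and> chain s t (t e) es)"

definition path_end :: "('e \<Rightarrow> 'v) \<Rightarrow> ('v,'e) qpath \<Rightarrow> 'v" where
  "path_end t p = (if snd p = [] then fst p else t (last (snd p)))"

definition is_path :: "'v set \<Rightarrow> 'e set \<Rightarrow> ('e \<Rightarrow> 'v) \<Rightarrow> ('e \<Rightarrow> 'v) \<Rightarrow> ('v,'e) qpath \<Rightarrow> bool" where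
  "is_path V E s t p \<longleftrightarrow> fst p \<in> V \<and> set (snd p) \<subseteq> E \<and> chain s t (fst p) (snd p)"

text \<open>Product of paths p * q: first q, then p (defined iff p starts where q ends),
otherwise 0 (None).\<close>
definition pmul :: "('e \<Rightarrow> 'v) \<Rightarrow> ('v,'e) qpath \<Rightarrow> ('v,'e) qpath \<Rightarrow> ('v,'e) qpath option" where
  "pmul t p q = (if fst p = path_end t q then Some (fst q, snd q @ snd p) else None)"

definition subpath :: "('e \<Rightarrow> 'v) \<Rightarrow> ('v,'e) qpath \<Rightarrow> ('v,'e) qpath \<Rightarrow> bool" where
  "subpath t p q \<longleftrightarrow> (\<exists>us ws. snd q = us @ snd p @ ws \<and> fst p = path_end t (fst q, us))"

definition maximal_path :: "'v set \<Rightarrow> 'e set \<Rightarrow> ('e \<Rightarrow> 'v) \<Rightarrow> ('e \<Rightarrow> 'v) \<Rightarrow> ('v,'e) qpath \<Rightarrow> bool" where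
  "maximal_path V E s t p \<longleftrightarrow> is_path V E s t p \<and>
     \<not> (\<exists>q. is_path V E s t q \<and> q \<noteq> p \<and> subpath t p q)"

definition is_source :: "'v set \<Rightarrow> 'e set \<Rightarrow> ('e \<Rightarrow> 'v) \<Rightarrow> ('e \<Rightarrow> 'v) \<Rightarrow> 'v \<Rightarrow> bool" where
  "is_source V E s t v \<longleftrightarrow> v \<in> V \<and> (\<forall>e\<in>E. t e \<noteq> v)"

definition is_sink :: "'v set \<Rightarrow> 'e set \<Rightarrow> ('e \<Rightarrow> 'v) \<Rightarrow> ('e \<Rightarrow> 'v) \<Rightarrow> 'v \<Rightarrow> bool" where
  "is_sink V E s t v \<longleftrightarrow> v \<in> V \<and> (\<forall>e\<in>E. s e \<noteq> v)"

definition cycle_quiver :: "'v set \<Rightarrow> 'e set \<Rightarrow> ('e \<Rightarrow> 'v) \<Rightarrow> ('e \<Rightarrow> 'v) \<Rightarrow> nat \<Rightarrow> bool" where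
  "cycle_quiver V E s t n \<longleftrightarrow> finite V \<and> finite E \<and> s ` E \<subseteq> V \<and> t ` E \<subseteq> V \<and>
     (\<exists>vs es. length vs = n \<and> length es = n \<and> distinct vs \<and> distinct es \<and>
        set vs = V \<and> set es = E \<and>
        (\<forall>i<n. {s (es ! i), t (es ! i)} = {vs ! i, vs ! ((i + 1) mod n)}))"

definition no_oriented_cycle :: "'v set \<Rightarrow> 'e set \<Rightarrow> ('e \<Rightarrow> 'v) \<Rightarrow> ('e \<Rightarrow> 'v) \<Rightarrow> bool" where
  "no_oriented_cycle V E s t \<longleftrightarrow>
     \<not> (\<exists>p. is_path V E s t p \<and> snd p \<noteq> [] \<and> path_end t p = fst p)"

definition admissible_A :: "'v set \<Rightarrow> 'e set \<Rightarrow> ('e \<Rightarrow> 'v) \<Rightarrow> ('e \<Rightarrow> 'v) \<Rightarrow> nat \<Rightarrow> bool" where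
  "admissible_A V E s t n \<longleftrightarrow> cycle_quiver V E s t n \<and> no_oriented_cycle V E s t \<and>
     (\<exists>v. is_source V E s t v)"

definition pathalg :: "'v set \<Rightarrow> 'e set \<Rightarrow> ('e \<Rightarrow> 'v) \<Rightarrow> ('e \<Rightarrow> 'v) \<Rightarrow> (('v,'e) qpath \<Rightarrow> 'k::field) set" where
  "pathalg V E s t = {f. finite {p. f p \<noteq> 0} \<and> (\<forall>p. f p \<noteq> 0 \<longrightarrow> is_path V E s t p)}"

definition amul :: "('e \<Rightarrow> 'v) \<Rightarrow> (('v,'e) qpath \<Rightarrow> 'k::field) \<Rightarrow> (('v,'e) qpath \<Rightarrow> 'k) \<Rightarrow> (('v,'e) qpath \<Rightarrow> 'k)" where
  "amul t f g = (\<lambda>r. \<Sum>(p,q) \<in> {p. f p \<noteq> 0} \<times> {q. g q \<noteq> 0}.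
                      if pmul t p q = Some r then f p * g q else 0)"

definition azero :: "('v,'e) qpath \<Rightarrow> 'k::field" where
  "azero = (\<lambda>_. 0)"

definition basis_el :: "('v,'e) qpath \<Rightarrow> ('v,'e) qpath \<Rightarrow> 'k::field" where
  "basis_el p = (\<lambda>r. if r = p then 1 else 0)"

definition two_sided_ideal :: "'v set \<Rightarrow> 'e set \<Rightarrow> ('e \<Rightarrow> 'v) \<Rightarrow> ('e \<Rightarrow> 'v) \<Rightarrow> (('v,'e) qpath \<Rightarrow> 'k::field) set \<Rightarrow> bool" where
  "two_sided_ideal V E s t I \<longleftrightarrow> I \<subseteq> pathalg V E s t \<and> azero \<in> I \<and>
     (\<forall>u\<in>I. \<forall>v\<in>I. (\<lambda>r. u r + v r) \<in> I) \<and>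
     (\<forall>c u. u \<in> I \<longrightarrow> (\<lambda>r. c * u r) \<in> I) \<and>
     (\<forall>f\<in>pathalg V E s t. \<forall>u\<in>I. amul t f u \<in> I \<and> amul t u f \<in> I)"

definition gen_ideal :: "'v set \<Rightarrow> 'e set \<Rightarrow> ('e \<Rightarrow> 'v) \<Rightarrow> ('e \<Rightarrow> 'v) \<Rightarrow> (('v,'e) qpath \<Rightarrow> 'k::field) \<Rightarrow> (('v,'e) qpath \<Rightarrow> 'k) set" where
  "gen_ideal V E s t u = \<Inter> {I. two_sided_ideal V E s t I \<and> u \<in> I}"

definition ideal_prod :: "('e \<Rightarrow> 'v) \<Rightarrow> (('v,'e) qpath \<Rightarrow> 'k::field) set \<Rightarrow> (('v,'e) qpath \<Rightarrow> 'k) set \<Rightarrow> (('v,'e) qpath \<Rightarrow> 'k) set" where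
  "ideal_prod t I J = {f. \<exists>(m::nat) us vs. (\<forall>i<m. us i \<in> I \<and> vs i \<in> J) \<and>
        f = (\<lambda>r. \<Sum>i<m. amul t (us i) (vs i) r)}"

definition indecomposable_ideal :: "'v set \<Rightarrow> 'e set \<Rightarrow> ('e \<Rightarrow> 'v) \<Rightarrow> ('e \<Rightarrow> 'v) \<Rightarrow> (('v,'e) qpath \<Rightarrow> 'k::field) set \<Rightarrow> bool" where
  "indecomposable_ideal V E s t I \<longleftrightarrow> two_sided_ideal V E s t I \<and> I \<noteq> {azero} \<and>
     \<not> (\<exists>J K. two_sided_ideal V E s t J \<and> two_sided_ideal V E s t K \<and>
            J \<noteq> {azero} \<and> K \<noteq> {azero} \<and> J \<inter> K = {azero} \<and>
            I = {(\<lambda>r. j r + k r) | j k. j \<in> J \<and> k \<in> K})"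

end

theory Submission
  imports Defs
begin

text \<open>Since \<open>x\<close> is the only source and \<open>y\<close> the only sink, both maximal paths run from \<open>x\<close>
to \<open>y\<close>, so \<open>u = \<omega> + a\<upsilon>\<close> lies in the corner \<open>\<epsilon>\<^sub>y kQ \<epsilon>\<^sub>x\<close>. Nothing can be composed with a
path before it starts at a source or after it ends at a sink except the trivial path there;
hence \<open>u f = f(\<epsilon>\<^sub>x) u\<close> and \<open>f u = f(\<epsilon>\<^sub>y) u\<close> for every \<open>f \<in> kQ\<close>. So the ideal generated by \<open>u\<close>
is the line \<open>ku\<close>, and its product with any set \<open>J\<close> is \<open>ku\<close> or \<open>0\<close> according as some element
of \<open>J\<close> has a nonzero \<open>\<epsilon>\<^sub>x\<close>-coefficient (resp. \<open>\<epsilon>\<^sub>y\<close>-coefficient); for an ideal this means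
\<open>\<epsilon>\<^sub>x \<in> I\<close> (resp. \<open>\<epsilon>\<^sub>y \<in> I\<close>). As \<open>x \<noteq> y\<close>, the element \<open>\<omega> + b\<upsilon>\<close> has no \<open>\<epsilon>\<^sub>x\<close>-coefficient,
which gives the last claim.\<close>

section \<open>Paths at sources and sinks\<close>

lemma path_end_at_source:
  assumes "is_path V E s t q" "path_end t q = x" "\<forall>e\<in>E. t e \<noteq> x"
  shows "q = (x, [])"
proof (cases "snd q = []")
  case True
  then show ?thesis using assms(2) by (cases q) (auto simp: path_end_def)
next
  case False
  then have "last (snd q) \<in> E" using assms(1) by (auto simp: is_path_def)
  then show ?thesis using assms False by (auto simp: path_end_def)
qed

lemma path_start_at_sink:
  assumes "is_path V E s t p" "fst p = y" "\<forall>e\<in>E. s e \<noteq> y"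
  shows "p = (y, [])"
proof (cases "snd p")
  case Nil
  then show ?thesis using assms(2) by (cases p) auto
next
  case (Cons e es)
  then show ?thesis using assms by (cases p) (auto simp: is_path_def)
qed

lemma path_end_in_vertices:
  assumes "is_path V E s t p" "t ` E \<subseteq> V"
  shows "path_end t p \<in> V"
proof (cases "snd p = []")
  case True
  then show ?thesis using assms by (auto simp: path_end_def is_path_def)
next
  case False
  then have "last (snd p) \<in> E" using assms(1) by (auto simp: is_path_def)
  then show ?thesis using assms(2) False by (auto simp: path_end_def)
qed

lemma chain_snoc: "chain s t v (es @ [e]) \<longleftrightarrow> chain s t v es \<and> s e = path_end t (v, es)"
  by (induction es arbitrary: v) (auto simp: path_end_def)

lemma maximal_path_starts_at_source:
  assumes "maximal_path V E s t p" "s ` E \<subseteq> V"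
  shows "is_source V E s t (fst p)"
proof -
  have p: "is_path V E s t p" using assms(1) by (simp add: maximal_path_def)
  have "t e \<noteq> fst p" if e: "e \<in> E" for e
  proof
    assume "t e = fst p"
    moreover have "subpath t p (s e, e # snd p)"
      unfolding subpath_def by (rule exI[of _ "[e]"]) (use \<open>t e = fst p\<close> in \<open>auto simp: path_end_def\<close>)
    ultimately have "is_path V E s t (s e, e # snd p) \<and> (s e, e # snd p) \<noteq> p
        \<and> subpath t p (s e, e # snd p)"
      using p e assms(2) by (cases p) (auto simp: is_path_def)
    then show False using assms(1) by (auto simp: maximal_path_def)
  qed
  then show ?thesis using p by (auto simp: is_source_def is_path_def)
qed

lemma maximal_path_ends_at_sink:
  assumes "maximal_path V E s t p" "t ` E \<subseteq> V"
  shows "is_sink V E s t (path_end t p)"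
proof -
  have p: "is_path V E s t p" using assms(1) by (simp add: maximal_path_def)
  have "s e \<noteq> path_end t p" if e: "e \<in> E" for e
  proof
    assume "s e = path_end t p"
    moreover have "subpath t p (fst p, snd p @ [e])"
      unfolding subpath_def by (rule exI[of _ "[]"]) (auto simp: path_end_def)
    ultimately have "is_path V E s t (fst p, snd p @ [e]) \<and> (fst p, snd p @ [e]) \<noteq> p
        \<and> subpath t p (fst p, snd p @ [e])"
      using p e by (cases p) (auto simp: is_path_def chain_snoc)
    then show False using assms(1) by (auto simp: maximal_path_def)
  qed
  then show ?thesis using path_end_in_vertices[OF p assms(2)] by (auto simp: is_sink_def)
qed

lemma cycle_quiver_vertex_on_edge:
  assumes "cycle_quiver V E s t n" "v \<in> V"
  shows "\<exists>e\<in>E. s e = v \<or> t e = v"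
proof -
  obtain vs es where L: "length vs = n" "length es = n" "set vs = V" "set es = E"
    and adj: "\<forall>i<n. {s (es ! i), t (es ! i)} = {vs ! i, vs ! ((i + 1) mod n)}"
    using assms(1) unfolding cycle_quiver_def by blast
  obtain i where "i < n" "vs ! i = v" using assms(2) L by (metis in_set_conv_nth)
  then have "es ! i \<in> E" "v \<in> {s (es ! i), t (es ! i)}" using L adj by auto
  then show ?thesis by blast
qed

lemma cycle_quiver_source_ne_sink:
  assumes "cycle_quiver V E s t n" "is_source V E s t x" "is_sink V E s t y"
  shows "x \<noteq> y"
  using assms cycle_quiver_vertex_on_edge[OF assms(1), of x]
  by (auto simp: is_source_def is_sink_def)

section \<open>Multiplication by elements supported at a source or a sink\<close>

lemma amul_eq_double_sum:
  assumes "finite A" "finite B" "{p. f p \<noteq> 0} \<subseteq> A" "{q. g q \<noteq> 0} \<subseteq> B"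
  shows "amul t f g r = (\<Sum>p\<in>A. \<Sum>q\<in>B. if pmul t p q = Some r then f p * g q else (0::'k::field))"
proof -
  have "amul t f g r = (\<Sum>(p,q)\<in>A\<times>B. if pmul t p q = Some r then f p * g q else 0)"
    unfolding amul_def using assms by (intro sum.mono_neutral_left) (auto split: if_splits)
  then show ?thesis by (simp add: sum.cartesian_product)
qed

lemma basis_el_in_pathalg: "is_path V E s t p \<Longrightarrow> basis_el p \<in> pathalg V E s t"
  by (auto simp: basis_el_def pathalg_def)

lemma amul_from_source:
  assumes h: "h \<in> pathalg V E s t" and hx: "\<forall>p. h p \<noteq> 0 \<longrightarrow> fst p = x"
    and g: "g \<in> pathalg V E s t" and src: "\<forall>e\<in>E. t e \<noteq> x"
  shows "amul t h g = (\<lambda>r. g (x,[]) * (h r::'k::field))"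
proof
  fix r
  let ?A = "{p. h p \<noteq> 0}" and ?B = "{q. g q \<noteq> 0}"
  have fin: "finite ?A" "finite ?B" and gp: "\<And>q. g q \<noteq> 0 \<Longrightarrow> is_path V E s t q"
    using h g by (auto simp: pathalg_def)
  have pmul: "pmul t p q = (if q = (x,[]) then Some p else None)" if "p \<in> ?A" "q \<in> ?B" for p q
  proof (cases "path_end t q = x")
    case True
    then have "q = (x,[])" using path_end_at_source[OF gp] that src by auto
    then show ?thesis using hx that by (cases p) (auto simp: pmul_def path_end_def)
  next
    case False
    moreover have "fst p = x" using hx that by blast
    ultimately show ?thesis by (auto simp: pmul_def path_end_def)
  qed
  have "amul t h g r = (\<Sum>p\<in>?A. \<Sum>q\<in>?B. if pmul t p q = Some r then h p * g q else 0)"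
    using fin by (rule amul_eq_double_sum) auto
  also have "\<dots> = (\<Sum>p\<in>?A. \<Sum>q\<in>?B. if q = (x,[]) then (if p = r then h p * g q else 0) else 0)"
    by (intro sum.cong refl) (auto simp: pmul)
  also have "\<dots> = (\<Sum>p\<in>?A. if p = r then h p * g (x,[]) else 0)"
    by (intro sum.cong refl) (auto simp: fin)
  also have "\<dots> = g (x,[]) * h r"
    using fin(1) by auto
  finally show "amul t h g r = g (x,[]) * h r" .
qed

lemma amul_into_sink:
  assumes f: "f \<in> pathalg V E s t" and h: "h \<in> pathalg V E s t"
    and hy: "\<forall>q. h q \<noteq> 0 \<longrightarrow> path_end t q = y" and snk: "\<forall>e\<in>E. s e \<noteq> y"
  shows "amul t f h = (\<lambda>r. f (y,[]) * (h r::'k::field))"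
proof
  fix r
  let ?A = "{p. f p \<noteq> 0}" and ?B = "{q. h q \<noteq> 0}"
  have fin: "finite ?A" "finite ?B" and fp: "\<And>p. f p \<noteq> 0 \<Longrightarrow> is_path V E s t p"
    using f h by (auto simp: pathalg_def)
  have pmul: "pmul t p q = (if p = (y,[]) then Some q else None)" if "p \<in> ?A" "q \<in> ?B" for p q
  proof (cases "fst p = y")
    case True
    then have "p = (y,[])" using path_start_at_sink[OF fp] that snk by auto
    then show ?thesis using hy that by (cases q) (auto simp: pmul_def)
  next
    case False
    moreover have "path_end t q = y" using hy that by blast
    ultimately show ?thesis by (auto simp: pmul_def)
  qed
  have "amul t f h r = (\<Sum>p\<in>?A. \<Sum>q\<in>?B. if pmul t p q = Some r then f p * h q else 0)"
    using fin by (rule amul_eq_double_sum) auto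
  also have "\<dots> = (\<Sum>p\<in>?A. if p = (y,[]) then (\<Sum>q\<in>?B. if q = r then f p * h q else 0) else 0)"
    by (intro sum.cong refl) (auto simp: pmul)
  also have "\<dots> = (\<Sum>p\<in>?A. if p = (y,[]) then f p * h r else 0)"
    by (intro sum.cong refl) (auto simp: fin)
  also have "\<dots> = f (y,[]) * h r"
    using fin by auto
  finally show "amul t f h r = f (y,[]) * h r" .
qed

lemma two_sided_ideal_unscale:
  assumes "two_sided_ideal V E s t I" "(\<lambda>r. c * w r) \<in> I" "c \<noteq> (0::'k::field)"
  shows "w \<in> I"
proof -
  have "(\<lambda>r. inverse c * (c * w r)) \<in> I"
    using assms(1,2) unfolding two_sided_ideal_def by blast
  then show ?thesis using assms(3) by (simp add: mult.assoc[symmetric])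
qed

lemma source_trivial_path_in_ideal_iff:
  assumes I: "two_sided_ideal V E s t I" and x: "is_source V E s t x"
  shows "basis_el (x,[]) \<in> I \<longleftrightarrow> (\<exists>v\<in>I. v (x,[]) \<noteq> (0::'k::field))"
proof
  assume "basis_el (x,[]) \<in> I"
  then show "\<exists>v\<in>I. v (x,[]) \<noteq> 0" by (intro bexI) (auto simp: basis_el_def)
next
  assume "\<exists>v\<in>I. v (x,[]) \<noteq> 0"
  then obtain v where v: "v \<in> I" "v (x,[]) \<noteq> 0" by blast
  have ex: "basis_el (x,[]) \<in> pathalg V E s t" and vp: "v \<in> pathalg V E s t"
    using x I v by (auto intro: basis_el_in_pathalg simp: is_source_def is_path_def two_sided_ideal_def)
  have "amul t (basis_el (x,[])) v = (\<lambda>r. v (x,[]) * basis_el (x,[]) r)"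
    using x by (intro amul_from_source[OF ex _ vp]) (auto simp: basis_el_def is_source_def)
  moreover have "amul t (basis_el (x,[])) v \<in> I"
    using I v ex by (auto simp: two_sided_ideal_def)
  ultimately show "basis_el (x,[]) \<in> I"
    using two_sided_ideal_unscale[OF I _ v(2)] by simp
qed

lemma sink_trivial_path_in_ideal_iff:
  assumes I: "two_sided_ideal V E s t I" and y: "is_sink V E s t y"
  shows "basis_el (y,[]) \<in> I \<longleftrightarrow> (\<exists>v\<in>I. v (y,[]) \<noteq> (0::'k::field))"
proof
  assume "basis_el (y,[]) \<in> I"
  then show "\<exists>v\<in>I. v (y,[]) \<noteq> 0" by (intro bexI) (auto simp: basis_el_def)
next
  assume "\<exists>v\<in>I. v (y,[]) \<noteq> 0"
  then obtain v where v: "v \<in> I" "v (y,[]) \<noteq> 0" by blast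
  have ey: "basis_el (y,[]) \<in> pathalg V E s t" and vp: "v \<in> pathalg V E s t"
    using y I v by (auto intro: basis_el_in_pathalg simp: is_sink_def is_path_def two_sided_ideal_def)
  have "amul t v (basis_el (y,[])) = (\<lambda>r. v (y,[]) * basis_el (y,[]) r)"
    using y by (intro amul_into_sink[OF vp ey]) (auto simp: basis_el_def is_sink_def path_end_def)
  moreover have "amul t v (basis_el (y,[])) \<in> I"
    using I v ey by (auto simp: two_sided_ideal_def)
  ultimately show "basis_el (y,[]) \<in> I"
    using two_sided_ideal_unscale[OF I _ v(2)] by simp
qed

section \<open>Ideals spanned by a combination of paths from a source to a sink\<close>

definition corner :: "'v set \<Rightarrow> 'e set \<Rightarrow> ('e \<Rightarrow> 'v) \<Rightarrow> ('e \<Rightarrow> 'v) \<Rightarrow> 'v \<Rightarrow> 'v \<Rightarrow>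
    (('v,'e) qpath \<Rightarrow> 'k::field) set" where
  "corner V E s t x y = {u \<in> pathalg V E s t. \<forall>p. u p \<noteq> 0 \<longrightarrow> fst p = x \<and> path_end t p = y}"

definition multiples :: "('a \<Rightarrow> 'k::field) \<Rightarrow> ('a \<Rightarrow> 'k) set" where
  "multiples u = {f. \<exists>c. f = (\<lambda>r. c * u r)}"

lemma corner_scale: "u \<in> corner V E s t x y \<Longrightarrow> (\<lambda>r. c * u r) \<in> corner V E s t x y"
  by (auto simp: corner_def pathalg_def elim: finite_subset[rotated])

lemma basis_combination_in_corner:
  assumes "is_path V E s t \<omega>" "fst \<omega> = x" "path_end t \<omega> = y"
    and "is_path V E s t \<upsilon>" "fst \<upsilon> = x" "path_end t \<upsilon> = y"
  shows "(\<lambda>r. basis_el \<omega> r + c * basis_el \<upsilon> r) \<in> corner V E s t x y"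
proof -
  have "{p. basis_el \<omega> p + c * basis_el \<upsilon> p \<noteq> 0} \<subseteq> {\<omega>, \<upsilon>}"
    by (auto simp: basis_el_def split: if_splits)
  then show ?thesis
    using assms by (auto simp: corner_def pathalg_def elim: finite_subset)
qed

lemma multiples_two_sided_ideal:
  fixes u :: "('v,'e) qpath \<Rightarrow> 'k::field"
  assumes u: "u \<in> corner V E s t x y" and x: "is_source V E s t x" and y: "is_sink V E s t y"
  shows "two_sided_ideal V E s t (multiples u)"
  unfolding two_sided_ideal_def
proof (intro conjI ballI allI impI)
  show "multiples u \<subseteq> pathalg V E s t"
    using corner_scale[OF u] by (auto simp: multiples_def corner_def)
  show "azero \<in> multiples u"
    by (auto simp: multiples_def azero_def intro: exI[of _ 0])
next
  fix v w assume "v \<in> multiples u" "w \<in> multiples u"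
  then obtain c d where "v = (\<lambda>r. c * u r)" "w = (\<lambda>r. d * u r)" by (auto simp: multiples_def)
  then show "(\<lambda>r. v r + w r) \<in> multiples u"
    by (auto simp: multiples_def algebra_simps intro: exI[of _ "c + d"])
next
  fix c :: 'k and v assume "v \<in> multiples u"
  then obtain d where "v = (\<lambda>r. d * u r)" by (auto simp: multiples_def)
  then show "(\<lambda>r. c * v r) \<in> multiples u"
    by (auto simp: multiples_def mult.assoc intro: exI[of _ "c * d"])
next
  fix f :: "('v,'e) qpath \<Rightarrow> 'k" and v
  assume f: "f \<in> pathalg V E s t" and "v \<in> multiples u"
  then obtain d where v: "v = (\<lambda>r. d * u r)" by (auto simp: multiples_def)
  have cu: "(\<lambda>r. d * u r) \<in> corner V E s t x y" by (rule corner_scale[OF u])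
  have "amul t f v = (\<lambda>r. f (y,[]) * (d * u r))"
    unfolding v using cu y by (intro amul_into_sink[OF f]) (auto simp: corner_def is_sink_def)
  then show "amul t f v \<in> multiples u"
    by (auto simp: multiples_def mult.assoc intro: exI[where x="f (y,[]) * d"])
  have "amul t v f = (\<lambda>r. f (x,[]) * (d * u r))"
    unfolding v using cu x by (intro amul_from_source[OF _ _ f]) (auto simp: corner_def is_source_def)
  then show "amul t v f \<in> multiples u"
    by (auto simp: multiples_def mult.assoc intro: exI[where x="f (x,[]) * d"])
qed

lemma gen_ideal_eq_multiples:
  assumes "u \<in> corner V E s t x y" "is_source V E s t x" "is_sink V E s t y"
  shows "gen_ideal V E s t u = multiples u"
proof
  have "u \<in> multiples u" by (auto simp: multiples_def intro: exI[of _ 1])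
  then show "gen_ideal V E s t u \<subseteq> multiples u"
    unfolding gen_ideal_def using multiples_two_sided_ideal[OF assms] by auto
  show "multiples u \<subseteq> gen_ideal V E s t u"
    unfolding gen_ideal_def multiples_def two_sided_ideal_def by auto
qed

text \<open>The abstract \<open>mul\<close> lets this cover products with \<open>multiples u\<close> on either side.\<close>
lemma sums_of_products_with_multiples:
  fixes u :: "'a \<Rightarrow> 'k::field" and mul :: "('a \<Rightarrow> 'k) \<Rightarrow> ('a \<Rightarrow> 'k) \<Rightarrow> 'a \<Rightarrow> 'k"
  assumes mul: "\<And>c v. v \<in> J \<Longrightarrow> mul (\<lambda>r. c * u r) v = (\<lambda>r. c * \<phi> v * u r)"
  shows "{f. \<exists>(m::nat) us vs. (\<forall>i<m. us i \<in> multiples u \<and> vs i \<in> J) \<and>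
              f = (\<lambda>r. \<Sum>i<m. mul (us i) (vs i) r)}
       = (if \<exists>v\<in>J. \<phi> v \<noteq> 0 then multiples u else {\<lambda>_. 0})" (is "?S = _")
proof -
  have sum_form: "\<exists>d. f = (\<lambda>r. d * u r) \<and> (d \<noteq> 0 \<longrightarrow> (\<exists>v\<in>J. \<phi> v \<noteq> 0))" if f: "f \<in> ?S" for f
  proof -
    obtain m :: nat and us vs where uv: "\<forall>i<m. us i \<in> multiples u \<and> vs i \<in> J"
      and f: "f = (\<lambda>r. \<Sum>i<m. mul (us i) (vs i) r)"
      using f by auto
    have "\<forall>i. \<exists>c. i < m \<longrightarrow> us i = (\<lambda>r. c * u r)"
      using uv by (auto simp: multiples_def)
    then obtain c where c: "\<And>i. i < m \<Longrightarrow> us i = (\<lambda>r. c i * u r)"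
      by metis
    have "f = (\<lambda>r. (\<Sum>i<m. c i * \<phi> (vs i)) * u r)"
      unfolding f sum_distrib_right by (intro ext sum.cong) (simp_all add: c mul uv)
    moreover have "\<exists>v\<in>J. \<phi> v \<noteq> 0" if nonzero: "(\<Sum>i<m. c i * \<phi> (vs i)) \<noteq> 0"
    proof -
      obtain i where "i < m" "c i * \<phi> (vs i) \<noteq> 0"
        using nonzero sum.neutral[of "{..<m}" "\<lambda>i. c i * \<phi> (vs i)"] by auto
      then show ?thesis using uv by auto
    qed
    ultimately show ?thesis by blast
  qed
  have spanned: "multiples u \<subseteq> ?S" if v: "v \<in> J" "\<phi> v \<noteq> 0" for v
  proof
    fix f assume "f \<in> multiples u"
    then obtain c where f: "f = (\<lambda>r. c * u r)" by (auto simp: multiples_def)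
    have "mul (\<lambda>r. c / \<phi> v * u r) v = f"
      using mul[OF v(1), of "c / \<phi> v"] v(2) by (simp add: f)
    then have "f = (\<lambda>r. \<Sum>i<(1::nat). mul (\<lambda>r. c / \<phi> v * u r) v r)"
      by simp
    moreover have "(\<lambda>r. c / \<phi> v * u r) \<in> multiples u" unfolding multiples_def by blast
    ultimately show "f \<in> ?S"
      using v(1) by (intro CollectI exI[of _ 1] exI[of _ "\<lambda>_ r. c / \<phi> v * u r"] exI[of _ "\<lambda>_. v"]) simp
  qed
  show ?thesis
  proof (cases "\<exists>v\<in>J. \<phi> v \<noteq> 0")
    case True
    then obtain v where v: "v \<in> J" "\<phi> v \<noteq> 0" by blast
    have "?S \<subseteq> multiples u"
      using sum_form unfolding multiples_def by blast
    then have "?S = multiples u" using spanned[OF v] by (rule subset_antisym)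
    with True show ?thesis by simp
  next
    case False
    have "f = (\<lambda>_. 0)" if "f \<in> ?S" for f
      using sum_form[OF that] False by auto
    moreover have "(\<lambda>_. 0) \<in> ?S" by (auto intro!: exI[of _ 0])
    ultimately have "?S = {\<lambda>_. 0}" by blast
    with False show ?thesis by simp
  qed
qed

lemma ideal_prod_multiples_left:
  fixes u :: "('v,'e) qpath \<Rightarrow> 'k::field"
  assumes u: "u \<in> corner V E s t x y" and x: "is_source V E s t x" and J: "J \<subseteq> pathalg V E s t"
  shows "ideal_prod t (multiples u) J = (if \<exists>v\<in>J. v (x,[]) \<noteq> 0 then multiples u else {azero})"
  unfolding ideal_prod_def azero_def
proof (rule sums_of_products_with_multiples)
  fix c and v assume "v \<in> J"
  then have "amul t (\<lambda>r. c * u r) v = (\<lambda>r. v (x,[]) * (c * u r))"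
    using corner_scale[OF u, of c] x J
    by (intro amul_from_source) (auto simp: corner_def is_source_def)
  then show "amul t (\<lambda>r. c * u r) v = (\<lambda>r. c * v (x,[]) * u r)"
    by (simp add: mult_ac)
qed

lemma ideal_prod_swap:
  "ideal_prod t J K = {f. \<exists>(m::nat) us vs. (\<forall>i<m. us i \<in> K \<and> vs i \<in> J) \<and>
                          f = (\<lambda>r. \<Sum>i<m. amul t (vs i) (us i) r)}"
  unfolding ideal_prod_def by blast

lemma ideal_prod_multiples_right:
  fixes u :: "('v,'e) qpath \<Rightarrow> 'k::field"
  assumes u: "u \<in> corner V E s t x y" and y: "is_sink V E s t y" and J: "J \<subseteq> pathalg V E s t"
  shows "ideal_prod t J (multiples u) = (if \<exists>v\<in>J. v (y,[]) \<noteq> 0 then multiples u else {azero})"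
  unfolding ideal_prod_swap azero_def
proof (rule sums_of_products_with_multiples)
  fix c and v assume "v \<in> J"
  then have "amul t v (\<lambda>r. c * u r) = (\<lambda>r. v (y,[]) * (c * u r))"
    using corner_scale[OF u, of c] y J
    by (intro amul_into_sink) (auto simp: corner_def is_sink_def)
  then show "amul t v (\<lambda>r. c * u r) = (\<lambda>r. c * v (y,[]) * u r)"
    by (simp add: mult_ac)
qed

lemma corner_vanishes_at_other_trivial_path:
  assumes "u \<in> corner V E s t x y" "z \<noteq> y"
  shows "u (z,[]) = 0"
proof (rule ccontr)
  assume "u (z,[]) \<noteq> 0"
  moreover have "\<forall>p. u p \<noteq> 0 \<longrightarrow> fst p = x \<and> path_end t p = y"
    using assms(1) unfolding corner_def mem_Collect_eq by (rule conjunct2)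
  ultimately have "path_end t (z,[]) = y" by blast
  then show False using assms(2) by (simp add: path_end_def)
qed

lemma maximal_path_from_source_to_sink:
  assumes "cycle_quiver V E s t n" "maximal_path V E s t p"
    and "{v. is_source V E s t v} = {x}" "{v. is_sink V E s t v} = {y}"
  shows "is_path V E s t p \<and> fst p = x \<and> path_end t p = y"
proof -
  have "s ` E \<subseteq> V" "t ` E \<subseteq> V" using assms(1) by (auto simp: cycle_quiver_def)
  then have "is_source V E s t (fst p)" "is_sink V E s t (path_end t p)"
    using maximal_path_starts_at_source[OF assms(2)] maximal_path_ends_at_sink[OF assms(2)]
    by simp_all
  then show ?thesis
    using assms(2-4) by (auto simp: maximal_path_def)
qed

theorem lemma23:
  fixes V :: "'v set" and E :: "'e set" and s t :: "'e \<Rightarrow> 'v" and n :: nat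
    and x y :: 'v and \<omega> \<upsilon> :: "('v,'e) qpath" and a :: "'k::alg_closed_field"
  assumes "admissible_A V E s t n"
    and "{v. is_source V E s t v} = {x}"
    and "{v. is_sink V E s t v} = {y}"
    and "\<omega> \<noteq> \<upsilon>"
    and "{p. maximal_path V E s t p} = {\<omega>, \<upsilon>}"
    and "a \<noteq> 0"
  shows "(\<forall>I. indecomposable_ideal V E s t I \<longrightarrow>
            ideal_prod t (gen_ideal V E s t (\<lambda>r. basis_el \<omega> r + a * basis_el \<upsilon> r)) I =
              (if basis_el (x, []) \<in> I
               then gen_ideal V E s t (\<lambda>r. basis_el \<omega> r + a * basis_el \<upsilon> r)
               else {azero}))
       \<and> (\<forall>I. indecomposable_ideal V E s t I \<longrightarrow>
            ideal_prod t I (gen_ideal V E s t (\<lambda>r. basis_el \<omega> r + a * basis_el \<upsilon> r)) =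
              (if basis_el (y, []) \<in> I
               then gen_ideal V E s t (\<lambda>r. basis_el \<omega> r + a * basis_el \<upsilon> r)
               else {azero}))
       \<and> (\<forall>b::'k. b \<noteq> 0 \<longrightarrow>
            ideal_prod t (gen_ideal V E s t (\<lambda>r. basis_el \<omega> r + a * basis_el \<upsilon> r))
                         (gen_ideal V E s t (\<lambda>r. basis_el \<omega> r + b * basis_el \<upsilon> r)) = {azero})"
proof -
  have cq: "cycle_quiver V E s t n" using assms(1) by (simp add: admissible_A_def)
  have x: "is_source V E s t x" and y: "is_sink V E s t y" using assms(2,3) by auto
  have u: "(\<lambda>r. basis_el \<omega> r + c * basis_el \<upsilon> r) \<in> corner V E s t x y" for c :: 'k
    using maximal_path_from_source_to_sink[OF cq _ assms(2,3)] assms(5)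
    by (intro basis_combination_in_corner) blast+
  note gen = gen_ideal_eq_multiples[OF u x y]
  note pathalg = two_sided_ideal_def[THEN iffD1, THEN conjunct1]
  show ?thesis
  proof (intro conjI allI impI)
    fix I :: "(('v,'e) qpath \<Rightarrow> 'k) set"
    assume "indecomposable_ideal V E s t I"
    then have I: "two_sided_ideal V E s t I" by (simp add: indecomposable_ideal_def)
    show "ideal_prod t (gen_ideal V E s t (\<lambda>r. basis_el \<omega> r + a * basis_el \<upsilon> r)) I =
        (if basis_el (x, []) \<in> I then gen_ideal V E s t (\<lambda>r. basis_el \<omega> r + a * basis_el \<upsilon> r)
         else {azero})"
      by (simp add: gen ideal_prod_multiples_left[OF u x pathalg[OF I]]
          source_trivial_path_in_ideal_iff[OF I x])
    show "ideal_prod t I (gen_ideal V E s t (\<lambda>r. basis_el \<omega> r + a * basis_el \<upsilon> r)) =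
        (if basis_el (y, []) \<in> I then gen_ideal V E s t (\<lambda>r. basis_el \<omega> r + a * basis_el \<upsilon> r)
         else {azero})"
      by (simp add: gen ideal_prod_multiples_right[OF u y pathalg[OF I]]
          sink_trivial_path_in_ideal_iff[OF I y])
  next
    fix b :: 'k
    have "x \<noteq> y" by (rule cycle_quiver_source_ne_sink[OF cq x y])
    then have "\<not> (\<exists>v\<in>multiples (\<lambda>r. basis_el \<omega> r + b * basis_el \<upsilon> r). v (x,[]) \<noteq> 0)"
      using corner_vanishes_at_other_trivial_path[OF u] by (auto simp: multiples_def)
    then show "ideal_prod t (gen_ideal V E s t (\<lambda>r. basis_el \<omega> r + a * basis_el \<upsilon> r))
        (gen_ideal V E s t (\<lambda>r. basis_el \<omega> r + b * basis_el \<upsilon> r)) = {azero}"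
      by (simp only: gen ideal_prod_multiples_left[OF u x pathalg[OF multiples_two_sided_ideal[OF u x y]]]
          if_False)
  qed
qed

end
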